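(* There exist constants $\lambda_1,\lambda_2>0$ such that, $\mu$-almost surely, for every dual vertex $x\in(\mathbb Z^2)^*$ there exists $N\in\mathbb N$ such that for all $n>N$ and every connected subgraph $G$ of $x+[n]^2$ with at least $\log n$ vertices, \[\lambda_1|E(G)|\geq |w|(G)\geq\lambda_2|E(G)|.\]
   Context: $\mu$ is the product measure on $\mathbb R^{E(\mathbb Z^2)}$ under which the interactions $(w_e)$ are i.i.d. standard normal; dual edges of $(\mathbb Z^2)^*=(\tfrac12,\tfrac12)+\mathbb Z^2$ carry the interaction of the unique edge of $\mathbb Z^2$ they cross. $[n]=\{0,\dots,n-1\}$ and $[n]^2$ is the induced subgraph of the (dual) lattice on $\{(i,j)+(\tfrac12,\tfrac12):i,j\in[n]\}$, so $x+[n]^2$ is its translate. For a subgraph $G$, $|w|(G)=\sum_{e\in E(G)}|w_e|$. $\log$ is the natural logarithm. *)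

theory Defs
  imports "HOL-Probability.Probability"
begin

type_synonym vtx = "int \<times> int"

text \<open>A dual vertex (i,j)+(1/2,1/2) of (Z^2)^* is
  represented by the integer pair (i,j).\<close>

definition nn :: "vtx \<Rightarrow> vtx \<Rightarrow> bool" where
  "nn u v \<longleftrightarrow> \<bar>fst u - fst v\<bar> + \<bar>snd u - snd v\<bar> = 1"

definition Z2_edges :: "vtx set set" where
  "Z2_edges = {{p, q} | p q. nn p q}"

definition std_gauss :: "real measure" where
  "std_gauss = density lborel std_normal_density"

definition mu :: "(vtx set \<Rightarrow> real) measure" where
  "mu = PiM Z2_edges (\<lambda>_. std_gauss)"

text \<open>Horizontal dual edge (i,j)--(i+1,j) crosses
  {(i+1,j),(i+1,j+1)}; vertical dual edge (i,j)--(i,j+1) crosses {(i,j+1),(i+1,j+1)}.\<close>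
definition cross_aux :: "vtx \<Rightarrow> vtx \<Rightarrow> vtx set" where
  "cross_aux u v =
     (if snd u = snd v
      then (let i = min (fst u) (fst v) in {(i + 1, snd u), (i + 1, snd u + 1)})
      else (let j = min (snd u) (snd v) in {(fst u, j + 1), (fst u + 1, j + 1)}))"

definition dual_cross :: "vtx set \<Rightarrow> vtx set" where
  "dual_cross e = (THE c. \<exists>u v. e = {u, v} \<and> c = cross_aux u v)"

definition box :: "vtx \<Rightarrow> nat \<Rightarrow> vtx set" where
  "box x n = {(fst x + int i, snd x + int j) | i j. i < n \<and> j < n}"

definition subgraph_box :: "vtx \<Rightarrow> nat \<Rightarrow> vtx set \<Rightarrow> vtx set set \<Rightarrow> bool" where
  "subgraph_box x n V F \<longleftrightarrow> V \<subseteq> box x n \<and>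
     (\<forall>e\<in>F. \<exists>u v. e = {u, v} \<and> nn u v \<and> u \<in> V \<and> v \<in> V)"

definition connected_graph :: "vtx set \<Rightarrow> vtx set set \<Rightarrow> bool" where
  "connected_graph V F \<longleftrightarrow> V \<noteq> {} \<and>
     (\<forall>u\<in>V. \<forall>v\<in>V. (\<lambda>a b. {a, b} \<in> F)\<^sup>*\<^sup>* u v)"

definition abs_weight :: "(vtx set \<Rightarrow> real) \<Rightarrow> vtx set set \<Rightarrow> real" where
  "abs_weight w F = (\<Sum>e\<in>F. \<bar>w (dual_cross e)\<bar>)"

end

theory Submission
  imports Defs
begin

(*
  A connected subgraph G of x + [n]^2 with m edges is swept out by a closed walk of 2m steps
  starting in the box, so at most n^2 16^m edge sets of size m occur, and |V(G)| >= log n forces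
  2m + 1 >= log n.  For a fixed set S of m edges of Z^2 the weights are i.i.d. standard normal:
  |w|(S) < 2^-46 m forces half of the |w_e| below 2^-45 (small-ball bound), and |w|(S) > 39 m
  forces a profile of Gaussian tail events (moment bound); either has probability at most
  2^-21m.  The union bound makes an atypical admissible G in x + [n]^2 have probability
  O(n^-3), which is summable, so Borel-Cantelli applies to each of the countably many x.
*)

section \<open>Gaussian estimates\<close>

lemma std_normal_density_le_1: "std_normal_density x \<le> 1"
proof -
  have "1 / sqrt (2 * pi) \<le> 1"
    using pi_gt3 by (simp add: divide_le_eq_1 real_le_rsqrt)
  moreover have "exp (- x\<^sup>2 / 2) \<le> 1"
    by simp
  ultimately show ?thesis
    unfolding std_normal_density_def
    by (metis exp_ge_zero mult_le_one zero_le_divide_1_iff real_sqrt_ge_zero pi_ge_zero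
        mult_nonneg_nonneg zero_le_numeral)
qed

lemma prob_space_std_gauss: "prob_space std_gauss"
  unfolding std_gauss_def by (simp add: prob_space_normal_density)

lemma sets_std_gauss [simp]: "sets std_gauss = sets borel"
  unfolding std_gauss_def by simp

lemma std_gauss_abs_le: "0 \<le> d \<Longrightarrow> measure std_gauss {x. \<bar>x\<bar> \<le> d} \<le> 2 * d"
proof -
  assume "0 \<le> d"
  have "emeasure std_gauss {-d..d} = (\<integral>\<^sup>+x. ennreal (std_normal_density x) * indicator {-d..d} x \<partial>lborel)"
    unfolding std_gauss_def by (subst emeasure_density) auto
  also have "\<dots> \<le> (\<integral>\<^sup>+x. indicator {-d..d} x \<partial>lborel)"
    by (intro nn_integral_mono) (auto simp: indicator_def std_normal_density_le_1)
  also have "\<dots> = ennreal (2 * d)"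
    using \<open>0 \<le> d\<close> by simp
  finally have "emeasure std_gauss {-d..d} \<le> ennreal (2 * d)" .
  moreover have "{x. \<bar>x\<bar> \<le> d} = {-d..d}"
    by auto
  ultimately show ?thesis
    using \<open>0 \<le> d\<close> by (simp add: measure_def enn2real_leI)
qed

lemma fact_double_over_double_fact_le: "fact (2 * j) / (2 ^ j * fact j) \<le> (real j) ^ j"
proof -
  have "fact (2 * j) = (fact (2 * j) div fact j) * (fact j :: nat)"
    by (simp add: fact_dvd)
  also have "\<dots> \<le> (2 * j) ^ j * fact j"
    using fact_div_fact_le_pow[of j "2 * j"] by (intro mult_right_mono) auto
  finally have "fact (2 * j) \<le> (real (2 * j)) ^ j * fact j"
    by (metis of_nat_fact of_nat_le_iff of_nat_mult of_nat_power)
  then show ?thesis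
    by (simp add: field_simps power_mult_distrib)
qed

lemma std_gauss_abs_ge: "measure std_gauss {x. 3 * real j \<le> \<bar>x\<bar>} \<le> (1/9) ^ j"
proof (cases "j = 0")
  case True
  then show ?thesis
    using prob_space.prob_le_1[OF prob_space_std_gauss] by simp
next
  case False
  define c where "c = (3 * real j) ^ (2 * j)"
  have c_pos: "c > 0"
    unfolding c_def using False by simp
  have moment: "integrable std_gauss (\<lambda>x. x ^ (2 * j))"
    "(\<integral>x. x ^ (2 * j) \<partial>std_gauss) = fact (2 * j) / (2 ^ j * fact j)"
    unfolding std_gauss_def
    using integrable_std_normal_moment[of "2 * j"] integral_std_normal_moment_even[of j]
    by (simp_all add: integrable_density integral_density)
  have "3 * real j \<le> \<bar>x\<bar> \<longleftrightarrow> c \<le> x ^ (2 * j)" for x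
  proof -
    have "3 * real j \<le> \<bar>x\<bar> \<longleftrightarrow> c \<le> \<bar>x\<bar> ^ (2 * j)"
      unfolding c_def using False by (intro power_mono_iff[symmetric]) auto
    then show ?thesis
      by (simp add: power_even_abs)
  qed
  then have "{x. 3 * real j \<le> \<bar>x\<bar>} = {x \<in> space std_gauss. c \<le> x ^ (2 * j)}"
    by (auto simp: std_gauss_def)
  then have "measure std_gauss {x. 3 * real j \<le> \<bar>x\<bar>} \<le> fact (2 * j) / (2 ^ j * fact j) / c"
    using integral_Markov_inequality_measure[OF moment(1) sets.top _ c_pos] moment(2)
    by (simp add: zero_le_even_power)
  also have "\<dots> \<le> real j ^ j / c"
    using fact_double_over_double_fact_le[of j] c_pos by (intro divide_right_mono) auto
  also have "\<dots> = (1/9) ^ j / real j ^ j"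
  proof -
    have "c = 9 ^ j * real j ^ j * real j ^ j"
      unfolding c_def by (simp add: power_mult power_mult_distrib power2_eq_square)
    then show ?thesis
      using False by (simp add: power_one_over)
  qed
  also have "\<dots> \<le> (1/9) ^ j"
    using False by (simp add: divide_le_eq one_le_power)
  finally show ?thesis .
qed

section \<open>Sums of absolute values of i.i.d. variables\<close>

lemma
  fixes M :: "'b measure"
  assumes "prob_space M" "J \<subseteq> I" "finite J" "\<And>i. i \<in> J \<Longrightarrow> X i \<in> sets M"
  shows sets_PiM_cylinder: "{w \<in> space (PiM I (\<lambda>_. M)). \<forall>i\<in>J. w i \<in> X i} \<in> sets (PiM I (\<lambda>_. M))"
    and measure_PiM_cylinder:
      "measure (PiM I (\<lambda>_. M)) {w \<in> space (PiM I (\<lambda>_. M)). \<forall>i\<in>J. w i \<in> X i}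
        = (\<Prod>i\<in>J. measure M (X i))"
proof -
  interpret prob_space M
    by fact
  have cyl: "{w \<in> space (PiM I (\<lambda>_. M)). \<forall>i\<in>J. w i \<in> X i} = prod_emb I (\<lambda>_. M) J (PiE J X)"
    using assms(2) by (auto simp: prod_emb_def space_PiM PiE_iff extensional_def)
  show "{w \<in> space (PiM I (\<lambda>_. M)). \<forall>i\<in>J. w i \<in> X i} \<in> sets (PiM I (\<lambda>_. M))"
    unfolding cyl using assms by (intro measurable_prod_emb sets_PiM_I_finite) auto
  have "emeasure (PiM I (\<lambda>_. M)) {w \<in> space (PiM I (\<lambda>_. M)). \<forall>i\<in>J. w i \<in> X i}
      = (\<Prod>i\<in>J. ennreal (measure M (X i)))"
    unfolding cyl using assms
    by (simp add: emeasure_PiM_emb emeasure_eq_measure)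
  then show "measure (PiM I (\<lambda>_. M)) {w \<in> space (PiM I (\<lambda>_. M)). \<forall>i\<in>J. w i \<in> X i}
      = (\<Prod>i\<in>J. measure M (X i))"
    by (simp add: measure_def prod_ennreal prod_nonneg)
qed

lemma small_abs_sum_imp_many_small:
  fixes f :: "'i \<Rightarrow> real"
  assumes "finite S" "0 < d" "(\<Sum>i\<in>S. \<bar>f i\<bar>) < d / 2 * card S"
  shows "\<exists>A\<subseteq>S. card S \<le> 2 * card A \<and> (\<forall>i\<in>A. \<bar>f i\<bar> \<le> d)"
proof (intro exI conjI)
  let ?A = "{i\<in>S. \<bar>f i\<bar> \<le> d}"
  show "?A \<subseteq> S" "\<forall>i\<in>?A. \<bar>f i\<bar> \<le> d"
    by auto
  have "d * card (S - ?A) = (\<Sum>i\<in>S - ?A. d)"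
    by simp
  also have "\<dots> \<le> (\<Sum>i\<in>S - ?A. \<bar>f i\<bar>)"
    by (intro sum_mono) auto
  also have "\<dots> \<le> (\<Sum>i\<in>S. \<bar>f i\<bar>)"
    using assms(1) by (intro sum_mono2) auto
  finally have "d * real (2 * card (S - ?A)) < d * real (card S)"
    using assms(3) by simp
  then have "2 * card (S - ?A) < card S"
    using assms(2) by (simp only: mult_less_cancel_left_pos of_nat_less_iff)
  moreover have "card S = card ?A + card (S - ?A)"
    using assms(1) by (metis (no_types, lifting) card_Diff_subset card_mono finite_subset
        le_add_diff_inverse mem_Collect_eq subsetI)
  ultimately show "card S \<le> 2 * card ?A"
    by linarith
qed

lemma measure_PiM_small_abs_sum:
  fixes M :: "real measure"
  assumes M: "prob_space M" "sets M = sets borel" and S: "S \<subseteq> I" "finite S"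
    and "0 < d" "0 \<le> p" "p \<le> 1" and small_ball: "measure M {x. \<bar>x\<bar> \<le> d} \<le> p\<^sup>2"
  shows "measure (PiM I (\<lambda>_. M)) {w \<in> space (PiM I (\<lambda>_. M)). (\<Sum>i\<in>S. \<bar>w i\<bar>) < d / 2 * card S}
    \<le> (2 * p) ^ card S"
proof -
  let ?P = "PiM I (\<lambda>_. M)"
  let ?\<A> = "{A. A \<subseteq> S \<and> card S \<le> 2 * card A}"
  let ?C = "\<lambda>A. {w \<in> space ?P. \<forall>i\<in>A. w i \<in> {x. \<bar>x\<bar> \<le> d}}"
  interpret prob_space ?P
    using M(1) by (rule prob_space_PiM)
  have ball: "{x::real. \<bar>x\<bar> \<le> d} \<in> sets M"
    unfolding M(2) by measurable
  have A: "A \<subseteq> I" "finite A" if "A \<in> ?\<A>" for A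
    using that S by (auto intro: finite_subset)
  have cyl: "?C A \<in> sets ?P" if "A \<in> ?\<A>" for A
    using A[OF that] ball by (intro sets_PiM_cylinder[OF M(1)])
  have cyl_measure: "measure ?P (?C A) \<le> p ^ card S" if "A \<in> ?\<A>" for A
  proof -
    have "measure ?P (?C A) = measure M {x. \<bar>x\<bar> \<le> d} ^ card A"
      using measure_PiM_cylinder[OF M(1) A[OF that], of "\<lambda>_. {x. \<bar>x\<bar> \<le> d}"] ball by simp
    also have "\<dots> \<le> (p\<^sup>2) ^ card A"
      using small_ball by (intro power_mono) auto
    also have "\<dots> \<le> p ^ card S"
      using that \<open>0 \<le> p\<close> \<open>p \<le> 1\<close> by (auto simp flip: power_mult intro: power_decreasing)
    finally show ?thesis .
  qed
  have "measure ?P {w \<in> space ?P. (\<Sum>i\<in>S. \<bar>w i\<bar>) < d / 2 * card S} \<le> measure ?P (\<Union>A\<in>?\<A>. ?C A)"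
    using small_abs_sum_imp_many_small[OF S(2) \<open>0 < d\<close>] S(2) cyl
    by (intro finite_measure_mono sets.finite_UN) auto
  also have "\<dots> \<le> (\<Sum>A\<in>?\<A>. measure ?P (?C A))"
    using S(2) cyl by (intro measure_UNION_le) auto
  also have "\<dots> \<le> (\<Sum>A\<in>?\<A>. p ^ card S)"
    by (intro sum_mono cyl_measure)
  also have "\<dots> = card ?\<A> * p ^ card S"
    by simp
  also have "\<dots> \<le> 2 ^ card S * p ^ card S"
  proof -
    have "card ?\<A> \<le> card (Pow S)"
      using S(2) by (intro card_mono) auto
    then show ?thesis
      using S(2) \<open>0 \<le> p\<close> by (intro mult_right_mono) (auto simp: card_Pow)
  qed
  finally show ?thesis
    by (simp add: power_mult_distrib)
qed

lemma large_abs_sum_imp_tail_profile: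
  fixes f :: "'i \<Rightarrow> real" and a :: real
  assumes "finite S" "0 < a" "13 * a * card S < (\<Sum>i\<in>S. \<bar>f i\<bar>)"
  shows "\<exists>m \<in> S \<rightarrow>\<^sub>E {0..12 * card S}.
    12 * card S \<le> sum m S \<and> (\<forall>i\<in>S. a * real (m i) \<le> \<bar>f i\<bar>)"
proof -
  define K where "K = 12 * card S"
  define k where "k i = nat \<lfloor>\<bar>f i\<bar> / a\<rfloor>" for i
  have k_le: "a * real (k i) \<le> \<bar>f i\<bar>" and k_gt: "\<bar>f i\<bar> < a * real (k i) + a" for i
  proof -
    have "real (k i) = of_int \<lfloor>\<bar>f i\<bar> / a\<rfloor>"
      unfolding k_def using \<open>0 < a\<close> by simp
    then have "real (k i) \<le> \<bar>f i\<bar> / a" "\<bar>f i\<bar> / a < real (k i) + 1"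
      by linarith+
    then show "a * real (k i) \<le> \<bar>f i\<bar>" "\<bar>f i\<bar> < a * real (k i) + a"
      using \<open>0 < a\<close> by (simp_all add: field_simps)
  qed
  have "(\<Sum>i\<in>S. \<bar>f i\<bar>) \<le> (\<Sum>i\<in>S. a * real (k i) + a)"
    by (intro sum_mono) (simp add: k_gt less_imp_le)
  then have "a * real K < a * real (\<Sum>i\<in>S. k i)"
    using assms(3) unfolding K_def by (simp add: sum.distrib sum_distrib_left algebra_simps)
  then have "K < (\<Sum>i\<in>S. k i)"
    using \<open>0 < a\<close> by (simp only: mult_less_cancel_left_pos of_nat_less_iff)
  define m where "m = restrict (\<lambda>i. min (k i) K) S"
  have "K \<le> sum m S"
  proof (cases "\<exists>i\<in>S. K \<le> k i")
    case True
    then obtain i where "i \<in> S" "K \<le> k i"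
      by blast
    then have "K = m i"
      unfolding m_def by simp
    also have "\<dots> \<le> sum m S"
      using \<open>i \<in> S\<close> assms(1) by (intro member_le_sum) auto
    finally show ?thesis .
  next
    case False
    then have "sum m S = (\<Sum>i\<in>S. k i)"
      unfolding m_def by (intro sum.cong) auto
    then show ?thesis
      using \<open>K < (\<Sum>i\<in>S. k i)\<close> by simp
  qed
  moreover have "a * real (m i) \<le> \<bar>f i\<bar>" if "i \<in> S" for i
  proof -
    have "a * real (m i) \<le> a * real (k i)"
      using that \<open>0 < a\<close> unfolding m_def by (intro mult_left_mono) auto
    then show ?thesis
      using k_le[of i] by linarith
  qed
  moreover have "m \<in> S \<rightarrow>\<^sub>E {0..K}"
    unfolding m_def by auto
  ultimately show ?thesis
    unfolding K_def by blast
qed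

lemma measure_PiM_large_abs_sum:
  fixes M :: "real measure" and a :: real
  assumes M: "prob_space M" "sets M = sets borel" and S: "S \<subseteq> I" "finite S" and "0 < a"
    and tail: "\<And>j. measure M {x. a * real j \<le> \<bar>x\<bar>} \<le> (1/9) ^ j"
  shows "measure (PiM I (\<lambda>_. M)) {w \<in> space (PiM I (\<lambda>_. M)). 13 * a * card S < (\<Sum>i\<in>S. \<bar>w i\<bar>)}
    \<le> ((1/2) ^ 21) ^ card S"
proof -
  let ?P = "PiM I (\<lambda>_. M)"
  define K where "K = 12 * card S"
  let ?\<M> = "{m \<in> S \<rightarrow>\<^sub>E {0..K}. K \<le> sum m S}"
  let ?C = "\<lambda>m. {w \<in> space ?P. \<forall>i\<in>S. w i \<in> {x. a * real (m i) \<le> \<bar>x\<bar>}}"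
  interpret prob_space ?P
    using M(1) by (rule prob_space_PiM)
  have tail_sets: "{x::real. a * real j \<le> \<bar>x\<bar>} \<in> sets M" for j
    unfolding M(2) by measurable
  have fin: "finite (S \<rightarrow>\<^sub>E {0..K})"
    using S(2) by (intro finite_PiE) auto
  have cyl: "?C m \<in> sets ?P" for m
    using S tail_sets by (intro sets_PiM_cylinder[OF M(1)])
  (* Paying 4^-K per profile (as sum m S >= K) makes the sum over all profiles factorize. *)
  have cyl_measure: "measure ?P (?C m) \<le> 1 / 4 ^ K * (\<Prod>i\<in>S. (4/9) ^ m i)" if "m \<in> ?\<M>" for m
  proof -
    have "measure ?P (?C m) = (\<Prod>i\<in>S. measure M {x. a * real (m i) \<le> \<bar>x\<bar>})"
      using measure_PiM_cylinder[OF M(1) S, of "\<lambda>i. {x. a * real (m i) \<le> \<bar>x\<bar>}"] tail_sets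
      by simp
    also have "\<dots> \<le> (\<Prod>i\<in>S. (1/9) ^ m i)"
      by (intro prod_mono conjI tail) auto
    also have "\<dots> = 1 / 4 ^ sum m S * (\<Prod>i\<in>S. (4/9) ^ m i)"
    proof -
      have "(\<Prod>i\<in>S. (4/9::real) ^ m i) = 4 ^ sum m S * (\<Prod>i\<in>S. (1/9) ^ m i)"
        by (simp add: power_sum flip: prod.distrib power_mult_distrib)
      then show ?thesis
        by simp
    qed
    also have "\<dots> \<le> 1 / 4 ^ K * (\<Prod>i\<in>S. (4/9) ^ m i)"
      using that by (intro mult_right_mono divide_left_mono power_increasing prod_nonneg) auto
    finally show ?thesis .
  qed
  have "measure ?P {w \<in> space ?P. 13 * a * card S < (\<Sum>i\<in>S. \<bar>w i\<bar>)} \<le> measure ?P (\<Union>m\<in>?\<M>. ?C m)"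
    using fin cyl unfolding K_def
    by (intro finite_measure_mono sets.finite_UN)
      (auto dest!: large_abs_sum_imp_tail_profile[OF S(2) \<open>0 < a\<close>])
  also have "\<dots> \<le> (\<Sum>m\<in>?\<M>. measure ?P (?C m))"
    using fin cyl by (intro measure_UNION_le) auto
  also have "\<dots> \<le> (\<Sum>m\<in>?\<M>. 1 / 4 ^ K * (\<Prod>i\<in>S. (4/9) ^ m i))"
    by (intro sum_mono cyl_measure)
  also have "\<dots> \<le> (\<Sum>m\<in>S \<rightarrow>\<^sub>E {0..K}. 1 / 4 ^ K * (\<Prod>i\<in>S. (4/9) ^ m i))"
    using fin by (intro sum_mono2) (auto intro!: divide_nonneg_pos prod_nonneg)
  also have "\<dots> = 1 / 4 ^ K * (\<Prod>i\<in>S. \<Sum>j\<in>{0..K}. (4/9) ^ j)"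
    unfolding sum_distrib_left[symmetric] by (subst prod_sum_PiE) (use S(2) in auto)
  also have "\<dots> \<le> 1 / 4 ^ K * (\<Prod>i\<in>S. 2)"
    using geometric_sum_less[of "4/9 :: real" "{0..K}"]
    by (intro mult_left_mono prod_mono conjI sum_nonneg) auto
  also have "\<dots> = (2 / 4 ^ 12) ^ card S"
  proof -
    have "(4::real) ^ K = (4 ^ 12) ^ card S"
      unfolding K_def by (simp add: power_mult)
    then have "1 / 4 ^ K * (\<Prod>i\<in>S. 2) = (2::real) ^ card S / (4 ^ 12) ^ card S"
      by simp
    then show ?thesis
      by (simp only: power_divide)
  qed
  also have "\<dots> \<le> ((1/2) ^ 21) ^ card S"
    by (intro power_mono) (auto simp: power_one_over)
  finally show ?thesis .
qed

section \<open>Walks\<close>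

fun walk_edges :: "'a list \<Rightarrow> 'a set set" where
  "walk_edges (a # b # r) = insert {a, b} (walk_edges (b # r))"
| "walk_edges _ = {}"

lemma finite_walk_edges [simp]: "finite (walk_edges ps)"
  by (induction ps rule: walk_edges.induct) auto

lemma walk_edges_subset_set: "e \<in> walk_edges ps \<Longrightarrow> e \<subseteq> set ps"
  by (induction ps rule: walk_edges.induct) auto

lemma walk_edges_detour:
  "walk_edges (xs @ p # q # p # ys) = insert {p, q} (walk_edges (xs @ p # ys))"
  by (induction xs rule: walk_edges.induct) (simp_all add: insert_commute)

lemma successively_detour:
  assumes "successively R (xs @ p # ys)" "R p q" "R q p"
  shows "successively R (xs @ p # q # p # ys)"
  using assms by (auto simp: successively_append_iff)

lemma edge_leaving_walk:
  assumes conn: "\<forall>u\<in>V. \<forall>v\<in>V. (\<lambda>a b. {a, b} \<in> F)\<^sup>*\<^sup>* u v"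
    and edges: "\<forall>e\<in>F. \<exists>u v. e = {u, v} \<and> u \<in> V \<and> v \<in> V"
    and walk: "walk_edges ps \<subset> F" "set ps \<subseteq> V" "v \<in> set ps"
  shows "\<exists>p q. {p, q} \<in> F - walk_edges ps \<and> p \<in> set ps"
proof -
  obtain e where e: "e \<in> F" "e \<notin> walk_edges ps"
    using walk(1) by blast
  then obtain a b where ab: "e = {a, b}" "a \<in> V"
    using edges by blast
  have "(\<lambda>a b. {a, b} \<in> F)\<^sup>*\<^sup>* v a"
    using conn walk(2,3) ab(2) by blast
  then have "a \<in> set ps \<or> (\<exists>p q. {p, q} \<in> F - walk_edges ps \<and> p \<in> set ps)"
  proof (induction rule: rtranclp_induct)
    case (step y z)
    show ?case
    proof (cases "y \<in> set ps \<and> {y, z} \<in> walk_edges ps")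
      case True
      then show ?thesis
        using walk_edges_subset_set by blast
    next
      case False
      then show ?thesis
        using step by blast
    qed
  qed (use walk(3) in simp)
  then show ?thesis
    using e ab(1) by blast
qed

(* Detours p, q, p along edges leaving the walk each add one new edge and two steps. *)
lemma walk_extends_to_all_edges:
  assumes "finite F" and edges: "\<forall>e\<in>F. \<exists>u v. e = {u, v} \<and> u \<in> V \<and> v \<in> V"
    and conn: "\<forall>u\<in>V. \<forall>v\<in>V. (\<lambda>a b. {a, b} \<in> F)\<^sup>*\<^sup>* u v"
    and walk: "successively (\<lambda>a b. {a, b} \<in> F) ps" "set ps \<subseteq> V" "ps \<noteq> []" "walk_edges ps \<subseteq> F"
      "length ps = 2 * card (walk_edges ps) + 1"
  shows "\<exists>ps'. successively (\<lambda>a b. {a, b} \<in> F) ps' \<and> set ps' \<subseteq> V \<and> ps' \<noteq> []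
    \<and> walk_edges ps' = F \<and> length ps' = 2 * card F + 1"
  using walk
proof (induction "card F - card (walk_edges ps)" arbitrary: ps rule: less_induct)
  case less
  show ?case
  proof (cases "walk_edges ps = F")
    case False
    then obtain p q where pq: "{p, q} \<in> F - walk_edges ps" "p \<in> set ps"
      using edge_leaving_walk[OF conn edges, of ps "hd ps"] less.prems by auto
    obtain xs ys where ps: "ps = xs @ p # ys"
      using pq(2) by (meson split_list)
    let ?ps' = "xs @ p # q # p # ys"
    have "q \<in> V"
      using pq(1) edges by (auto simp: doubleton_eq_iff)
    have card_ps': "card (walk_edges ?ps') = Suc (card (walk_edges ps))"
      using pq(1) unfolding ps walk_edges_detour by simp
    have "card (walk_edges ps) < card F"
      using less.prems False \<open>finite F\<close> by (intro psubset_card_mono) auto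
    then have "card F - card (walk_edges ?ps') < card F - card (walk_edges ps)"
      unfolding card_ps' by linarith
    moreover have "successively (\<lambda>a b. {a, b} \<in> F) ?ps'"
      using less.prems pq(1) unfolding ps by (intro successively_detour) (auto simp: insert_commute)
    moreover have "set ?ps' \<subseteq> V" "walk_edges ?ps' \<subseteq> F"
      using less.prems pq(1) \<open>q \<in> V\<close> unfolding ps walk_edges_detour by auto
    moreover have "length ?ps' = 2 * card (walk_edges ?ps') + 1"
      using less.prems card_ps' unfolding ps by simp
    ultimately show ?thesis
      using less.hyps[of ?ps'] by blast
  qed (use less.prems in blast)
qed

lemma closed_walk_covering_edges:
  assumes "finite F" and edges: "\<forall>e\<in>F. \<exists>u v. e = {u, v} \<and> u \<in> V \<and> v \<in> V"
    and conn: "\<forall>u\<in>V. \<forall>v\<in>V. (\<lambda>a b. {a, b} \<in> F)\<^sup>*\<^sup>* u v" and "V \<noteq> {}"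
  shows "\<exists>ps. successively (\<lambda>a b. {a, b} \<in> F) ps \<and> set ps = V \<and> walk_edges ps = F
    \<and> length ps = 2 * card F + 1"
proof -
  obtain v where "v \<in> V"
    using \<open>V \<noteq> {}\<close> by blast
  then obtain ps where ps: "successively (\<lambda>a b. {a, b} \<in> F) ps" "set ps \<subseteq> V" "ps \<noteq> []"
      "walk_edges ps = F" "length ps = 2 * card F + 1"
    using walk_extends_to_all_edges[OF assms(1-3), of "[v]"] by auto
  have "V \<subseteq> set ps"
  proof
    fix u assume "u \<in> V"
    show "u \<in> set ps"
    proof (cases "u = hd ps")
      case False
      have "hd ps \<in> V"
        using ps(2,3) hd_in_set by blast
      then have "(\<lambda>a b. {a, b} \<in> F)\<^sup>*\<^sup>* u (hd ps)"
        using conn \<open>u \<in> V\<close> by blast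
      then obtain z where "{u, z} \<in> F"
        using False by (cases rule: converse_rtranclpE) auto
      then show ?thesis
        using ps(4) walk_edges_subset_set by blast
    qed (use ps(3) hd_in_set in blast)
  qed
  with ps show ?thesis
    by (intro exI[of _ ps]) auto
qed

definition walks :: "('a \<Rightarrow> 'a \<Rightarrow> bool) \<Rightarrow> 'a set \<Rightarrow> nat \<Rightarrow> 'a list set" where
  "walks R B L = {ps. length ps = Suc L \<and> successively R ps \<and> hd ps \<in> B}"

lemma walks_0: "walks R B 0 = (\<lambda>p. [p]) ` B"
  unfolding walks_def by (auto simp: length_Suc_conv)

lemma walks_Suc: "walks R B (Suc L) = (\<Union>p\<in>B. Cons p ` walks R {q. R p q} L)"
proof (intro equalityI subsetI)
  fix ps assume "ps \<in> walks R B (Suc L)"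
  then obtain p q r where "ps = p # q # r" "p \<in> B" "R p q" "q # r \<in> walks R {q. R p q} L"
    unfolding walks_def by (auto simp: length_Suc_conv)
  then show "ps \<in> (\<Union>p\<in>B. Cons p ` walks R {q. R p q} L)"
    by blast
next
  fix ps assume "ps \<in> (\<Union>p\<in>B. Cons p ` walks R {q. R p q} L)"
  then obtain p q r where "ps = p # q # r" "p \<in> B" "R p q" "q # r \<in> walks R {q. R p q} L"
    unfolding walks_def by (auto simp: length_Suc_conv)
  then show "ps \<in> walks R B (Suc L)"
    unfolding walks_def by simp
qed

lemma card_walks_le:
  assumes "finite B" "\<And>p. finite {q. R p q}" "\<And>p. card {q. R p q} \<le> d"
  shows "finite (walks R B L) \<and> card (walks R B L) \<le> card B * d ^ L"
  using assms(1)
proof (induction L arbitrary: B)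
  case 0
  then show ?case
    by (simp add: walks_0 card_image_le)
next
  case (Suc L)
  have IH: "finite (walks R {q. R p q} L)" "card (walks R {q. R p q} L) \<le> d * d ^ L" for p
    using Suc.IH[OF assms(2)] assms(3)[of p] by (auto intro: order.trans mult_right_mono)
  have "card (walks R B (Suc L)) \<le> (\<Sum>p\<in>B. card (Cons p ` walks R {q. R p q} L))"
    unfolding walks_Suc by (rule card_UN_le[OF Suc.prems])
  also have "\<dots> \<le> (\<Sum>p\<in>B. d * d ^ L)"
    using IH(2) by (intro sum_mono) (simp add: card_image)
  finally show ?case
    using Suc.prems IH(1) by (simp add: walks_Suc)
qed

section \<open>The dual lattice\<close>

lemma nn_sym: "nn u v \<Longrightarrow> nn v u"
  unfolding nn_def by linarith

lemma nn_neighbours: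
  "{q. nn p q} = set [(fst p + 1, snd p), (fst p - 1, snd p), (fst p, snd p + 1), (fst p, snd p - 1)]"
  unfolding nn_def by (cases p) (auto simp: abs_if split: if_splits)

lemma finite_nn: "finite {q. nn p q}"
  unfolding nn_neighbours by simp

lemma card_nn_le: "card {q. nn p q} \<le> 4"
  unfolding nn_neighbours by (rule order.trans[OF card_length]) simp

lemma cross_aux_commute: "nn u v \<Longrightarrow> cross_aux v u = cross_aux u v"
  unfolding cross_aux_def nn_def Let_def by (auto simp: min.commute)

lemma dual_cross_eq:
  assumes "nn u v"
  shows "dual_cross {u, v} = cross_aux u v"
  unfolding dual_cross_def
proof (rule the_equality)
  fix c assume "\<exists>u' v'. {u, v} = {u', v'} \<and> c = cross_aux u' v'"
  then show "c = cross_aux u v"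
    using cross_aux_commute[OF assms] by (auto simp: doubleton_eq_iff)
qed blast

lemma cross_aux_in_Z2_edges: "cross_aux u v \<in> Z2_edges"
proof -
  have "nn p q \<Longrightarrow> {p, q} \<in> Z2_edges" for p q
    unfolding Z2_edges_def by blast
  then show ?thesis
    unfolding cross_aux_def Let_def by (simp add: nn_def)
qed

lemma cross_aux_inj:
  assumes "nn u v" "nn u' v'" "cross_aux u v = cross_aux u' v'"
  shows "{u, v} = {u', v'}"
  using assms unfolding nn_def cross_aux_def Let_def
  by (cases u; cases v; cases u'; cases v') (auto simp: doubleton_eq_iff min_def split: if_splits)

definition nn_edges :: "vtx set set \<Rightarrow> bool" where
  "nn_edges F \<longleftrightarrow> (\<forall>e\<in>F. \<exists>u v. e = {u, v} \<and> nn u v)"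

lemma inj_on_dual_cross: "nn_edges F \<Longrightarrow> inj_on dual_cross F"
  unfolding nn_edges_def inj_on_def by (metis dual_cross_eq cross_aux_inj)

lemma dual_cross_image_subset: "nn_edges F \<Longrightarrow> dual_cross ` F \<subseteq> Z2_edges"
  unfolding nn_edges_def by (auto simp: dual_cross_eq cross_aux_in_Z2_edges)

lemma finite_box: "finite (box x n)"
  and card_box_le: "card (box x n) \<le> n * n"
proof -
  have box: "box x n = (\<lambda>(i, j). (fst x + int i, snd x + int j)) ` ({..<n} \<times> {..<n})"
    unfolding box_def by force
  show "finite (box x n)"
    unfolding box by simp
  show "card (box x n) \<le> n * n"
    unfolding box using card_image_le[of "{..<n} \<times> {..<n}"] by (simp add: card_cartesian_product)
qed

lemma nn_edges_walk_edges: "successively nn ps \<Longrightarrow> nn_edges (walk_edges ps)"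
  unfolding nn_edges_def by (induction ps rule: walk_edges.induct) auto

lemma abs_weight_eq_sum_dual_cross:
  "nn_edges F \<Longrightarrow> abs_weight w F = (\<Sum>c\<in>dual_cross ` F. \<bar>w c\<bar>)"
  unfolding abs_weight_def by (simp add: sum.reindex inj_on_dual_cross)

lemma subgraph_box_nn_edges: "subgraph_box x n V F \<Longrightarrow> nn_edges F"
  unfolding subgraph_box_def nn_edges_def by meson

lemma subgraph_box_finite: "subgraph_box x n V F \<Longrightarrow> finite F"
  and subgraph_box_card_le: "subgraph_box x n V F \<Longrightarrow> card F \<le> 2 ^ (n * n)"
proof -
  assume "subgraph_box x n V F"
  then have "F \<subseteq> Pow (box x n)"
    unfolding subgraph_box_def by fastforce
  then show "finite F"
    using finite_box by (meson finite_Pow_iff finite_subset)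
  have "card F \<le> card (Pow (box x n))"
    using \<open>F \<subseteq> Pow (box x n)\<close> finite_box by (intro card_mono) auto
  also have "\<dots> = 2 ^ card (box x n)"
    by (simp add: card_Pow finite_box)
  also have "\<dots> \<le> 2 ^ (n * n)"
    by (intro power_increasing card_box_le) simp
  finally show "card F \<le> 2 ^ (n * n)" .
qed

section \<open>Exceptional events\<close>

lemma prob_space_mu: "prob_space mu"
  unfolding mu_def using prob_space_std_gauss by (rule prob_space_PiM)

lemma borel_measurable_abs_sum_mu:
  assumes "S \<subseteq> Z2_edges"
  shows "(\<lambda>w. \<Sum>e\<in>S. \<bar>w e\<bar>) \<in> borel_measurable mu"
proof -
  have "(\<lambda>w. w e) \<in> borel_measurable mu" if "e \<in> Z2_edges" for e
    using measurable_component_singleton[OF that, of "\<lambda>_. std_gauss"]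
    unfolding mu_def by (simp add: measurable_cong_sets[OF refl sets_std_gauss])
  then show ?thesis
    using assms by (intro borel_measurable_sum borel_measurable_abs) auto
qed

definition atypical :: "vtx set set \<Rightarrow> (vtx set \<Rightarrow> real) set" where
  "atypical S = {w \<in> space mu. (\<Sum>e\<in>S. \<bar>w e\<bar>) < (1/2) ^ 46 * real (card S)}
    \<union> {w \<in> space mu. 39 * real (card S) < (\<Sum>e\<in>S. \<bar>w e\<bar>)}"

lemma sets_atypical: "S \<subseteq> Z2_edges \<Longrightarrow> atypical S \<in> sets mu"
  unfolding atypical_def using borel_measurable_abs_sum_mu by measurable

lemma measure_atypical:
  assumes "S \<subseteq> Z2_edges" "finite S"
  shows "measure mu (atypical S) \<le> 2 * ((1/2) ^ 21) ^ card S"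
proof -
  have "measure mu {w \<in> space mu. (\<Sum>e\<in>S. \<bar>w e\<bar>) < (1/2) ^ 45 / 2 * card S}
      \<le> (2 * (1/2) ^ 22) ^ card S"
    unfolding mu_def using assms std_gauss_abs_le[of "(1/2) ^ 45"]
    by (intro measure_PiM_small_abs_sum prob_space_std_gauss) (auto simp: power_one_over)
  moreover have "measure mu {w \<in> space mu. 13 * (3::real) * card S < (\<Sum>e\<in>S. \<bar>w e\<bar>)}
      \<le> ((1/2) ^ 21) ^ card S"
    unfolding mu_def using assms std_gauss_abs_ge
    by (intro measure_PiM_large_abs_sum prob_space_std_gauss) auto
  moreover have "measure mu (atypical S)
      \<le> measure mu {w \<in> space mu. (\<Sum>e\<in>S. \<bar>w e\<bar>) < (1/2) ^ 46 * real (card S)}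
        + measure mu {w \<in> space mu. 39 * real (card S) < (\<Sum>e\<in>S. \<bar>w e\<bar>)}"
    unfolding atypical_def
    by (intro measure_Un_le) (use borel_measurable_abs_sum_mu[OF assms(1)] in measurable)
  ultimately show ?thesis
    by (simp add: power_one_over)
qed

definition atypical_walks :: "vtx \<Rightarrow> nat \<Rightarrow> nat \<Rightarrow> (vtx set \<Rightarrow> real) set" where
  "atypical_walks x n m = (\<Union>ps \<in> {ps \<in> walks nn (box x n) (2 * m). card (walk_edges ps) = m}.
     atypical (dual_cross ` walk_edges ps))"

(* The cap m <= 2^(n n) only keeps the union finite: no subgraph of the box has more edges. *)
definition exceptional :: "vtx \<Rightarrow> nat \<Rightarrow> (vtx set \<Rightarrow> real) set" where
  "exceptional x n =
     (\<Union>m \<in> {m. m \<le> 2 ^ (n * n) \<and> ln (real n) \<le> 2 * real m + 1}. atypical_walks x n m)"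

lemma finite_walks_nn: "finite (walks nn (box x n) L)"
  and card_walks_nn_le: "card (walks nn (box x n) L) \<le> n * n * 4 ^ L"
  using card_walks_le[of "box x n" nn 4 L] finite_box finite_nn card_nn_le card_box_le[of x n]
  by (auto intro: order.trans mult_right_mono)

lemma atypical_walk_edges:
  assumes "ps \<in> walks nn B L"
  shows "atypical (dual_cross ` walk_edges ps) \<in> sets mu"
    and "measure mu (atypical (dual_cross ` walk_edges ps)) \<le> 2 * ((1/2) ^ 21) ^ card (walk_edges ps)"
proof -
  have "nn_edges (walk_edges ps)"
    using assms unfolding walks_def by (simp add: nn_edges_walk_edges)
  then have "dual_cross ` walk_edges ps \<subseteq> Z2_edges"
    "card (dual_cross ` walk_edges ps) = card (walk_edges ps)"
    by (simp_all add: dual_cross_image_subset card_image inj_on_dual_cross)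
  then show "atypical (dual_cross ` walk_edges ps) \<in> sets mu"
    "measure mu (atypical (dual_cross ` walk_edges ps)) \<le> 2 * ((1/2) ^ 21) ^ card (walk_edges ps)"
    using sets_atypical measure_atypical[of "dual_cross ` walk_edges ps"] by auto
qed

lemma sets_atypical_walks: "atypical_walks x n m \<in> sets mu"
  unfolding atypical_walks_def using finite_walks_nn atypical_walk_edges(1)
  by (intro sets.finite_UN) auto

lemma sets_exceptional: "exceptional x n \<in> sets mu"
  unfolding exceptional_def using sets_atypical_walks
  by (intro sets.finite_UN) (auto intro: finite_subset[of _ "{..2 ^ (n * n)}"])

lemma measure_atypical_walks_le:
  "measure mu (atypical_walks x n m) \<le> 2 * (real n ^ 2 * ((1/2) ^ 17) ^ m)"
proof -
  let ?W = "{ps \<in> walks nn (box x n) (2 * m). card (walk_edges ps) = m}"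
  have "measure mu (atypical_walks x n m)
      \<le> (\<Sum>ps\<in>?W. measure mu (atypical (dual_cross ` walk_edges ps)))"
    unfolding atypical_walks_def using finite_walks_nn atypical_walk_edges(1)
    by (intro measure_UNION_le) auto
  also have "\<dots> \<le> (\<Sum>ps\<in>?W. 2 * ((1/2) ^ 21) ^ m)"
    using atypical_walk_edges(2) by (intro sum_mono) fastforce
  also have "\<dots> \<le> real (card (walks nn (box x n) (2 * m))) * (2 * ((1/2) ^ 21) ^ m)"
    using card_mono[OF finite_walks_nn, of ?W] by (auto intro!: mult_right_mono)
  also have "\<dots> \<le> real (n * n * 4 ^ (2 * m)) * (2 * ((1/2) ^ 21) ^ m)"
    by (intro mult_right_mono of_nat_mono card_walks_nn_le) simp
  also have "\<dots> = 2 * (real n ^ 2 * ((1/2) ^ 17) ^ m)"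
  proof -
    have "(4::real) ^ (2 * m) * ((1/2) ^ 21) ^ m = (16 * (1/2) ^ 21) ^ m"
      by (simp add: power_mult power_mult_distrib)
    also have "(16::real) * (1/2) ^ 21 = (1/2) ^ 17"
      by (simp add: power_one_over)
    finally show ?thesis
      by (simp add: power2_eq_square)
  qed
  finally show ?thesis .
qed

lemma sq_times_geometric_le:
  assumes "1 \<le> n" "ln (real n) \<le> 2 * real m + 1"
  shows "real n ^ 2 * ((1/2) ^ 17) ^ m \<le> exp 5 / real n ^ 3 * (1/2) ^ m"
proof -
  have "exp (10::real) = exp 1 ^ 10"
    by (simp flip: exp_of_nat_mult)
  also have "\<dots> \<le> 3 ^ 10"
    using exp_le by (intro power_mono) auto
  also have "\<dots> \<le> 2 ^ 16"
    by simp
  finally have "((1/2) ^ 16) ^ m \<le> (exp (-10) :: real) ^ m"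
    by (intro power_mono) (auto simp: exp_minus power_one_over field_simps)
  also have "\<dots> = exp (5 - 5 * (2 * real m + 1))"
    by (simp flip: exp_of_nat_mult add: algebra_simps)
  also have "\<dots> \<le> exp (5 - 5 * ln (real n))"
    using assms(2) by simp
  also have "\<dots> = exp 5 / real n ^ 5"
    using assms(1) exp_of_nat_mult[of 5 "ln (real n)"] by (simp add: exp_diff)
  finally have "real n ^ 2 * ((1/2) ^ 16) ^ m \<le> real n ^ 2 * (exp 5 / real n ^ 5)"
    by (intro mult_left_mono) auto
  also have "\<dots> = exp 5 / real n ^ 3"
    using assms(1) by (simp add: field_simps power_eq_if)
  finally have "real n ^ 2 * ((1/2) ^ 16) ^ m * (1/2) ^ m \<le> exp 5 / real n ^ 3 * (1/2) ^ m"
    by (intro mult_right_mono) auto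
  moreover have "((1/2::real) ^ 17) ^ m = ((1/2) ^ 16) ^ m * (1/2) ^ m"
    by (simp add: power_one_over flip: power_mult_distrib)
  ultimately show ?thesis
    by (metis mult.assoc)
qed

lemma measure_exceptional_le:
  assumes "1 \<le> n"
  shows "measure mu (exceptional x n) \<le> 4 * exp 5 / real n ^ 3"
proof -
  let ?Ms = "{m. m \<le> 2 ^ (n * n) \<and> ln (real n) \<le> 2 * real m + 1}"
  have fin: "finite ?Ms"
    by (rule finite_subset[of _ "{..2 ^ (n * n)}"]) auto
  have "measure mu (exceptional x n) \<le> (\<Sum>m\<in>?Ms. measure mu (atypical_walks x n m))"
    unfolding exceptional_def using fin sets_atypical_walks by (intro measure_UNION_le) auto
  also have "\<dots> \<le> (\<Sum>m\<in>?Ms. 2 * (exp 5 / real n ^ 3 * (1/2) ^ m))"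
  proof (intro sum_mono)
    fix m
    assume "m \<in> ?Ms"
    then have "real n ^ 2 * ((1/2) ^ 17) ^ m \<le> exp 5 / real n ^ 3 * (1/2) ^ m"
      using sq_times_geometric_le[OF assms] by simp
    then show "measure mu (atypical_walks x n m) \<le> 2 * (exp 5 / real n ^ 3 * (1/2) ^ m)"
      using measure_atypical_walks_le[of x n m] by linarith
  qed
  also have "\<dots> = 2 * exp 5 / real n ^ 3 * (\<Sum>m\<in>?Ms. (1/2) ^ m)"
    by (simp add: sum_distrib_left mult.assoc)
  also have "\<dots> \<le> 2 * exp 5 / real n ^ 3 * 2"
    using geometric_sum_less[of "1/2 :: real", OF _ _ fin] by (intro mult_left_mono) auto
  finally show ?thesis
    by simp
qed

lemma summable_measure_exceptional: "summable (\<lambda>n. measure mu (exceptional x n))"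
proof (rule summable_comparison_test')
  show "summable (\<lambda>n. 4 * exp 5 * inverse (real n ^ 2))"
    using inverse_power_summable[of 2, where 'a=real] by (intro summable_mult) simp
  fix n :: nat
  assume "1 \<le> n"
  then have "measure mu (exceptional x n) \<le> 4 * exp 5 / real n ^ 3"
    by (rule measure_exceptional_le)
  also have "\<dots> \<le> 4 * exp 5 / real n ^ 2"
    using \<open>1 \<le> n\<close> by (intro divide_left_mono power_increasing) auto
  finally show "norm (measure mu (exceptional x n)) \<le> 4 * exp 5 * inverse (real n ^ 2)"
    by (simp add: divide_inverse)
qed

lemma weight_bounds_outside_exceptional:
  assumes w: "w \<in> space mu - exceptional x n"
    and G: "subgraph_box x n V F" "connected_graph V F" "ln (real n) \<le> real (card V)"
  shows "abs_weight w F \<le> 39 * real (card F) \<and> (1/2) ^ 46 * real (card F) \<le> abs_weight w F"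
proof -
  have F: "finite F" "nn_edges F"
    using subgraph_box_finite[OF G(1)] subgraph_box_nn_edges[OF G(1)] .
  have edges: "\<forall>e\<in>F. \<exists>u v. e = {u, v} \<and> u \<in> V \<and> v \<in> V"
    using G(1) unfolding subgraph_box_def by meson
  have conn: "\<forall>u\<in>V. \<forall>v\<in>V. (\<lambda>a b. {a, b} \<in> F)\<^sup>*\<^sup>* u v" "V \<noteq> {}"
    using G(2) unfolding connected_graph_def by auto
  obtain ps where ps: "successively (\<lambda>a b. {a, b} \<in> F) ps" "set ps = V" "walk_edges ps = F"
      "length ps = 2 * card F + 1"
    using closed_walk_covering_edges[OF F(1) edges conn] by blast
  have "successively nn ps"
    using ps(1)
  proof (rule successively_mono)
    fix a b
    assume "{a, b} \<in> F"
    then obtain u v where "{a, b} = {u, v}" "nn u v"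
      using F(2) unfolding nn_edges_def by blast
    then show "nn a b"
      by (auto simp: doubleton_eq_iff intro: nn_sym)
  qed
  moreover have "hd ps \<in> box x n"
  proof -
    have "ps \<noteq> []"
      using ps(4) by auto
    then have "hd ps \<in> V"
      using ps(2) hd_in_set by blast
    then show ?thesis
      using G(1) unfolding subgraph_box_def by blast
  qed
  ultimately have walk: "ps \<in> {ps \<in> walks nn (box x n) (2 * card F). card (walk_edges ps) = card F}"
    using ps(3,4) unfolding walks_def by simp
  have "real (card V) \<le> real (2 * card F + 1)"
    using card_length[of ps] ps(2,4) by (intro of_nat_mono) simp
  then have "card F \<in> {m. m \<le> 2 ^ (n * n) \<and> ln (real n) \<le> 2 * real m + 1}"
    using G(3) subgraph_box_card_le[OF G(1)] by simp
  with walk have "atypical (dual_cross ` walk_edges ps) \<subseteq> exceptional x n"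
    unfolding exceptional_def atypical_walks_def by blast
  then have "w \<notin> atypical (dual_cross ` F)"
    using w ps(3) by blast
  then show ?thesis
    using w F(2) unfolding atypical_def
    by (simp add: abs_weight_eq_sum_dual_cross card_image inj_on_dual_cross not_less)
qed

lemma AE_weight_bounds:
  "AE w in mu. \<forall>x. \<exists>N. \<forall>n > N. \<forall>V F.
     subgraph_box x n V F \<and> connected_graph V F \<and> ln (real n) \<le> real (card V) \<longrightarrow>
       abs_weight w F \<le> 39 * real (card F) \<and> (1/2) ^ 46 * real (card F) \<le> abs_weight w F"
proof -
  interpret prob_space mu
    by (rule prob_space_mu)
  have "AE w in mu. \<forall>x. eventually (\<lambda>n. w \<in> space mu - exceptional x n) sequentially"
    unfolding AE_all_countable
    by (intro allI borel_cantelli_AE1 sets_exceptional summable_measure_exceptional)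
      (simp add: emeasure_eq_measure)
  then show ?thesis
  proof (rule AE_mp, intro AE_I2 impI allI)
    fix w x
    assume "\<forall>x. eventually (\<lambda>n. w \<in> space mu - exceptional x n) sequentially"
    then obtain N where N: "\<And>n. N \<le> n \<Longrightarrow> w \<in> space mu - exceptional x n"
      unfolding eventually_sequentially by blast
    show "\<exists>N. \<forall>n > N. \<forall>V F.
       subgraph_box x n V F \<and> connected_graph V F \<and> ln (real n) \<le> real (card V) \<longrightarrow>
         abs_weight w F \<le> 39 * real (card F) \<and> (1/2) ^ 46 * real (card F) \<le> abs_weight w F"
      using N weight_bounds_outside_exceptional by (meson less_imp_le)
  qed
qed

theorem lemma2p3:
  shows "\<exists>l1 l2 :: real. l1 > 0 \<and> l2 > 0 \<and>
    (AE w in mu. \<forall>x :: vtx. \<exists>N :: nat. \<forall>n > N. \<forall>V F.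
       subgraph_box x n V F \<and> connected_graph V F \<and> real (card V) \<ge> ln (real n) \<longrightarrow>
         l1 * real (card F) \<ge> abs_weight w F \<and> abs_weight w F \<ge> l2 * real (card F))"
  using AE_weight_bounds by (intro exI[of _ 39] exI[of _ "(1/2) ^ 46"]) simp

end
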